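(* Suppose $\mu_x$ and $p_y$ are Borel measurable and $\mu_x$ is supported on $\{\|x\|\le1\}$. For $x\in\mathbb{R}^d$ let $\tilde x:=(x,1)/\sqrt2\in\mathbb{R}^{d+1}$. Then for any $\epsilon>0$ there exist infinite-width weights $\overline U_\infty:\mathbb{R}^{d+1}\to\mathbb{R}^{d+1}$ with $R:=\sup_{\tilde v\in\mathbb{R}^{d+1}}\|\overline U_\infty(\tilde v)\|<\infty$ and $\mathcal R(\overline U_\infty)\le\overline{\mathcal R}+\epsilon$.
   Context: $\mu$ is a Borel probability measure on $\mathbb{R}^d\times\{-1,+1\}$ with $x$-marginal $\mu_x$ and conditional $p_y(x)=\Pr[Y=1\mid X=x]$. $\ell(r)=\ln(1+e^{-r})$. For $U:\mathbb{R}^{d+1}\to\mathbb{R}^{d+1}$, $f(z;U)=\int\langle U(v),z\mathbf 1[v^\top z\ge0]\rangle\,d\mathcal N(v)$ with $\mathcal N$ the standard Gaussian on $\mathbb{R}^{d+1}$, and here $\mathcal R(\overline U_\infty)=\mathbb E\,\ell(Yf(\tilde X;\overline U_\infty))$. $\overline{\mathcal R}=\inf\{\mathbb E\,\ell(Yg(X)):g:\mathbb{R}^d\to\mathbb{R}\text{ measurable}\}$. *)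

theory Defs
  imports "HOL-Probability.Probability"
begin

definition logloss :: "real \<Rightarrow> real" where
  "logloss r = ln (1 + exp (- r))"

definition std_gauss :: "'b::euclidean_space measure" where
  "std_gauss = density lborel
     (\<lambda>v. ennreal ((2 * pi) powr (- real DIM('b) / 2) * exp (- (norm v)\<^sup>2 / 2)))"

text \<open>Lift x in R^d to (x,1)/sqrt 2 in R^(d+1), modelled as the product type 'a \<times> real.\<close>
definition lift :: "'a::euclidean_space \<Rightarrow> 'a \<times> real" where
  "lift x = (1 / sqrt 2) *\<^sub>R (x, 1)"

definition infnet :: "('b::euclidean_space \<Rightarrow> 'b) \<Rightarrow> 'b \<Rightarrow> real" where
  "infnet U z = (\<integral>v. (if v \<bullet> z \<ge> 0 then U v \<bullet> z else 0) \<partial>std_gauss)"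

text \<open>Risk of U; data measure mu on (x,y) with y in {-1,1}. Loss is nonnegative, so we
  use the nonnegative integral.\<close>
definition riskU :: "('a::euclidean_space \<times> real) measure \<Rightarrow> ('a \<times> real \<Rightarrow> 'a \<times> real) \<Rightarrow> ennreal" where
  "riskU \<mu> U = (\<integral>\<^sup>+ p. ennreal (logloss (snd p * infnet U (lift (fst p)))) \<partial>\<mu>)"

definition risk_opt :: "('a::euclidean_space \<times> real) measure \<Rightarrow> ennreal" where
  "risk_opt \<mu> = (INF g \<in> (borel_measurable borel :: ('a \<Rightarrow> real) set).
      \<integral>\<^sup>+ p. ennreal (logloss (snd p * g (fst p))) \<partial>\<mu>)"

end

(*
  Weights U(v) = 1_B(v) v / N(B), for a small ball B around u, make f(z;U) the N-average of
  max(0, v.z) over B, hence within radius(B) |z| of max(0, u.z).  Since f(z;U) is linear in U,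
  finite sums of ReLU ridge functions of the lifted input are approximable uniformly on the unit
  ball; piecewise-linear interpolation extends this to Lipschitz ridge functions such as exp(w.x),
  and Stone-Weierstrass for the algebra spanned by these exponentials to all continuous functions.
  On the risk side, a near-optimal measurable predictor can be clipped to [-M, M] at cost exp(-M)
  and then replaced by a continuous function close in L1 of the x-marginal (inner and outer
  regularity plus Urysohn); since the logistic loss is 1-Lipschitz, every approximation error
  passes directly to the risk.
*)

theory Submission
  imports Defs
begin

lemma one_plus_exp_pos: "0 < 1 + exp (t :: real)"
  by (simp add: add_pos_pos)

lemma logloss_nonneg: "0 \<le> logloss r"
  unfolding logloss_def by simp

lemma logloss_antimono: "a \<le> b \<Longrightarrow> logloss b \<le> logloss a"
  unfolding logloss_def by (simp add: one_plus_exp_pos)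

lemma logloss_le_exp_neg: "logloss r \<le> exp (- r)"
  unfolding logloss_def by (rule ln_add_one_self_le_self) simp

lemma logloss_lipschitz: "\<bar>logloss a - logloss b\<bar> \<le> \<bar>a - b\<bar>"
proof -
  have increase: "logloss a \<le> logloss b + (b - a)" if "a \<le> b" for a b :: real
  proof -
    have "1 + exp (- a) \<le> (1 + exp (- b)) * exp (b - a)"
      using that by (simp add: algebra_simps exp_diff exp_minus field_simps)
    then have "ln (1 + exp (- a)) \<le> ln ((1 + exp (- b)) * exp (b - a))"
      by (simp add: one_plus_exp_pos)
    also have "\<dots> = ln (1 + exp (- b)) + (b - a)"
      by (simp add: ln_mult_pos[OF one_plus_exp_pos exp_gt_zero])
    finally show ?thesis
      unfolding logloss_def .
  qed
  show ?thesis
    using increase[of a b] increase[of b a] logloss_antimono[of a b] logloss_antimono[of b a]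
    by (cases "a \<le> b") auto
qed

lemma logloss_label_lipschitz: "y \<in> {-1, 1} \<Longrightarrow> logloss (y * a) \<le> logloss (y * b) + \<bar>a - b\<bar>"
  using logloss_lipschitz[of "y * a" "y * b"] by (auto simp: abs_minus_commute)

lemma logloss_label_clamp:
  assumes "y \<in> {-1, 1}" "0 \<le> M"
  shows "logloss (y * max (- M) (min M t)) \<le> logloss (y * t) + exp (- M)"
proof -
  have "y * max (- M) (min M t) = max (- M) (min M (y * t))"
    using assms by auto
  moreover have "logloss (max (- M) (min M s)) \<le> logloss s + exp (- M)" for s
    using logloss_antimono[of s "- M"] logloss_nonneg[of s] logloss_nonneg[of M] logloss_le_exp_neg[of M] assms(2)
    by (cases "s \<le> - M"; cases "M \<le> s") auto
  ultimately show ?thesis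
    by simp
qed

lemma borel_measurable_logloss [measurable]: "logloss \<in> borel_measurable borel"
  unfolding logloss_def[abs_def]
  by (intro borel_measurable_continuous_onI continuous_intros) (metis one_plus_exp_pos less_irrefl)

section \<open>Piecewise-linear interpolation by ReLU ramps\<close>

(* The k-th summand is the ramp rising by phi(s (k+1)) - phi(s k) across [s k, s (k+1)], where
   s k = a + k h, so this is the piecewise-linear interpolant of phi at the knots s k. *)
definition relu_interp :: "(real \<Rightarrow> real) \<Rightarrow> real \<Rightarrow> real \<Rightarrow> nat \<Rightarrow> real \<Rightarrow> real" where
  "relu_interp \<phi> a h n t = \<phi> a + (\<Sum>k<n. (\<phi> (a + real (Suc k) * h) - \<phi> (a + real k * h)) / h *
      (max 0 (t - (a + real k * h)) - max 0 (t - (a + real (Suc k) * h))))"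

lemma grid_cell:
  assumes "0 < n" "a \<le> t" "t \<le> a + real n * h"
  obtains j where "j < n" "a + real j * h \<le> t" "t \<le> a + real (Suc j) * h"
  using assms
proof (induction n arbitrary: thesis)
  case 0
  then show ?case by simp
next
  case (Suc n)
  show ?case
  proof (cases "0 < n \<and> t \<le> a + real n * h")
    case True
    then show ?thesis using Suc.IH Suc.prems less_SucI by blast
  next
    case False
    then show ?thesis using Suc.prems by (intro Suc.prems(1)[of n]) auto
  qed
qed

lemma relu_interp_on_cell:
  assumes "h > 0" "j < n" "a + real j * h \<le> t" "t \<le> a + real (Suc j) * h"
  shows "relu_interp \<phi> a h n t = \<phi> (a + real j * h) +
    (\<phi> (a + real (Suc j) * h) - \<phi> (a + real j * h)) * ((t - (a + real j * h)) / h)"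
proof -
  define s where "s k = a + real k * h" for k
  define \<Delta> where "\<Delta> k = \<phi> (s (Suc k)) - \<phi> (s k)" for k
  have s_mono: "s i \<le> s k" if "i \<le> k" for i k
    using assms(1) that by (simp add: s_def mult_right_mono)
  have s_Suc: "s (Suc k) = s k + h" for k
    by (simp add: s_def algebra_simps)
  have ramp: "\<Delta> k / h * (max 0 (t - s k) - max 0 (t - s (Suc k))) =
      (if k < j then \<Delta> k else 0) + (if k = j then \<Delta> j * ((t - s j) / h) else 0)" for k
  proof -
    consider "k < j" | "k = j" | "j < k" by linarith
    then show ?thesis
    proof cases
      case 1
      then have "s (Suc k) \<le> t" using s_mono[of "Suc k" j] assms(3) by (simp add: s_def)
      then show ?thesis using 1 assms(1) s_Suc[of k] by simp
    next
      case 2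
      then show ?thesis using assms s_Suc[of j] by (simp add: s_def)
    next
      case 3
      then have "t \<le> s k" using s_mono[of "Suc j" k] assms(4) by (simp add: s_def)
      then show ?thesis using 3 s_Suc[of k] assms(1) by simp
    qed
  qed
  have "(\<Sum>k<n. \<Delta> k / h * (max 0 (t - s k) - max 0 (t - s (Suc k))))
      = (\<Sum>k<n. if k \<in> {..<j} then \<Delta> k else 0) + (\<Sum>k<n. if k = j then \<Delta> j * ((t - s j) / h) else 0)"
    by (simp only: ramp sum.distrib lessThan_iff)
  also have "\<dots> = (\<Sum>k<j. \<Delta> k) + \<Delta> j * ((t - s j) / h)"
    using assms(2) by (simp only: sum.inter_restrict[symmetric] sum.delta finite_lessThan)
      (simp add: Int_absorb1)
  also have "(\<Sum>k<j. \<Delta> k) = \<phi> (s j) - \<phi> a"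
    unfolding \<Delta>_def by (subst sum_lessThan_telescope) (simp add: s_def)
  finally show ?thesis
    unfolding relu_interp_def by (simp add: s_def \<Delta>_def)
qed

lemma relu_interp_error:
  assumes lip: "L-lipschitz_on {a..a + real n * h} \<phi>"
    and "h > 0" "n > 0" "t \<in> {a..a + real n * h}"
  shows "\<bar>\<phi> t - relu_interp \<phi> a h n t\<bar> \<le> 2 * L * h"
proof -
  obtain j where j: "j < n" "a + real j * h \<le> t" "t \<le> a + real (Suc j) * h"
    using grid_cell[of n a t h] assms by auto
  define s where "s k = a + real k * h" for k
  define \<theta> where "\<theta> = (t - s j) / h"
  have s_in: "s k \<in> {a..a + real n * h}" if "k \<le> n" for k
    using that \<open>h > 0\<close> by (simp add: s_def mult_right_mono)
  have \<theta>: "0 \<le> \<theta>" "\<theta> \<le> 1"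
    using j \<open>h > 0\<close> by (auto simp: \<theta>_def s_def divide_le_eq algebra_simps)
  have "\<bar>\<phi> t - \<phi> (s j)\<bar> \<le> L * \<bar>t - s j\<bar>"
    using lipschitz_onD[OF lip, of t "s j"] s_in[of j] j assms(4) by (simp add: dist_real_def)
  also have "\<dots> \<le> L * h"
    using j lipschitz_on_nonneg[OF lip] by (intro mult_left_mono) (auto simp: s_def algebra_simps)
  finally have near: "\<bar>\<phi> t - \<phi> (s j)\<bar> \<le> L * h" .
  have "\<bar>\<phi> (s (Suc j)) - \<phi> (s j)\<bar> \<le> L * \<bar>s (Suc j) - s j\<bar>"
    using lipschitz_onD[OF lip, of "s (Suc j)" "s j"] s_in[of j] s_in[of "Suc j"] j
    by (simp add: dist_real_def)
  also have "\<dots> = L * h"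
    using \<open>h > 0\<close> by (simp add: s_def algebra_simps)
  finally have "\<bar>(\<phi> (s (Suc j)) - \<phi> (s j)) * \<theta>\<bar> \<le> L * h"
    using \<theta> by (simp add: abs_mult) (metis abs_ge_zero mult_left_le order_trans)
  moreover have "relu_interp \<phi> a h n t = \<phi> (s j) + (\<phi> (s (Suc j)) - \<phi> (s j)) * \<theta>"
    using relu_interp_on_cell[OF \<open>h > 0\<close> j] by (simp add: s_def \<theta>_def)
  ultimately show ?thesis
    using near by linarith
qed

lemma sets_std_gauss [simp, measurable_cong]: "sets (std_gauss :: 'b::euclidean_space measure) = sets borel"
  by (simp add: std_gauss_def)

lemma emeasure_std_gauss:
  "A \<in> sets borel \<Longrightarrow> emeasure (std_gauss :: 'b::euclidean_space measure) A =
     (\<integral>\<^sup>+ v. ennreal ((2 * pi) powr (- real DIM('b) / 2) * exp (- (norm v)\<^sup>2 / 2)) * indicator A v \<partial>lborel)"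
  unfolding std_gauss_def by (subst emeasure_density) auto

lemma std_gauss_density_le_1:
  "(2 * pi) powr (- real DIM('b) / 2) * exp (- (norm (v :: 'b::euclidean_space))\<^sup>2 / 2) \<le> 1"
proof -
  have "1 \<le> (2 * pi) powr (real DIM('b) / 2)"
    by (rule ge_one_powr_ge_zero) (use pi_gt3 in auto)
  then have "(2 * pi) powr (- real DIM('b) / 2) \<le> 1"
    by (simp add: powr_minus_divide)
  moreover have "exp (- (norm v)\<^sup>2 / 2) \<le> 1" by simp
  ultimately show ?thesis by (simp add: mult_le_one)
qed

lemma emeasure_std_gauss_bounded_finite:
  fixes A :: "'b::euclidean_space set"
  assumes "bounded A" "A \<in> sets borel"
  shows "emeasure std_gauss A < \<infinity>"
proof -
  have "emeasure std_gauss A \<le> (\<integral>\<^sup>+ v. indicator A v \<partial>lborel)"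
    unfolding emeasure_std_gauss[OF assms(2)]
    using std_gauss_density_le_1[where 'b='b] by (intro nn_integral_mono) (simp split: split_indicator)
  also have "\<dots> < \<infinity>"
    using emeasure_bounded_finite[OF assms(1)] assms(2) by simp
  finally show ?thesis .
qed

lemma emeasure_std_gauss_ball_pos:
  fixes u :: "'b::euclidean_space"
  assumes "r > 0"
  shows "emeasure std_gauss (ball u r) > 0"
proof -
  define c where "c = (2 * pi) powr (- real DIM('b) / 2) * exp (- (norm u + r)\<^sup>2 / 2)"
  have "c > 0" unfolding c_def by simp
  moreover have "emeasure lborel (ball u r) > 0"
    using assms emeasure_lborel_ball_finite[of u r] by (simp add: emeasure_eq_ennreal_measure less_top)
  ultimately have "0 < ennreal c * emeasure lborel (ball u r)"
    by (simp add: ennreal_zero_less_mult_iff)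
  also have "\<dots> = (\<integral>\<^sup>+ v. ennreal c * indicator (ball u r) v \<partial>lborel)"
    by (rule nn_integral_cmult_indicator[symmetric]) simp
  also have "\<dots> \<le> emeasure std_gauss (ball u r)"
    unfolding emeasure_std_gauss[OF borel_open[OF open_ball]]
  proof (intro nn_integral_mono)
    fix v :: 'b
    have "norm v \<le> norm u + r" if "v \<in> ball u r"
      using that norm_triangle_sub[of v u] by (simp add: dist_norm norm_minus_commute)
    then have "c \<le> (2 * pi) powr (- real DIM('b) / 2) * exp (- (norm v)\<^sup>2 / 2)" if "v \<in> ball u r"
      using that unfolding c_def by (auto intro!: mult_left_mono power_mono)
    then show "ennreal c * indicator (ball u r) v
        \<le> ennreal ((2 * pi) powr (- real DIM('b) / 2) * exp (- (norm v)\<^sup>2 / 2)) * indicator (ball u r) v"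
      by (auto simp: ennreal_leI split: split_indicator)
  qed
  finally show ?thesis .
qed

section \<open>Infinite-width networks computing a single ReLU\<close>

(* Compact support is a convenience: f(z;U) is then the Gaussian integral of a bounded function
   over a ball, so no moment bounds for the Gaussian are needed. *)
definition compact_weights :: "('b::euclidean_space \<Rightarrow> 'b) \<Rightarrow> bool" where
  "compact_weights U \<longleftrightarrow>
     U \<in> borel_measurable borel \<and> (\<exists>R. \<forall>v. norm (U v) \<le> R) \<and> (\<exists>r. \<forall>v. r < norm v \<longrightarrow> U v = 0)"

lemma set_integrable_std_gauss_bounded:
  fixes f :: "'b::euclidean_space \<Rightarrow> real"
  assumes "bounded B" "B \<in> sets borel" "f \<in> borel_measurable borel" "\<And>v. v \<in> B \<Longrightarrow> \<bar>f v\<bar> \<le> C"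
  shows "set_integrable std_gauss B f"
  unfolding set_integrable_def
  using assms emeasure_std_gauss_bounded_finite[OF assms(1,2)]
  by (intro integrableI_bounded_set_indicator[where B = C]) auto

lemma integrable_infnet_integrand:
  fixes U :: "'b::euclidean_space \<Rightarrow> 'b"
  assumes "compact_weights U"
  shows "integrable std_gauss (\<lambda>v. if 0 \<le> v \<bullet> z then U v \<bullet> z else 0)"
proof -
  obtain R r where R: "\<And>v. norm (U v) \<le> R" and r: "\<And>v. r < norm v \<Longrightarrow> U v = 0"
    and U [measurable]: "U \<in> borel_measurable borel"
    using assms unfolding compact_weights_def by blast
  have "set_integrable std_gauss (cball 0 r) (\<lambda>v. if 0 \<le> v \<bullet> z then U v \<bullet> z else 0)"
  proof (rule set_integrable_std_gauss_bounded[where C = "R * norm z"])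
    show "\<bar>if 0 \<le> v \<bullet> z then U v \<bullet> z else 0\<bar> \<le> R * norm z" for v
      using Cauchy_Schwarz_ineq2[of "U v" z] mult_right_mono[OF R[of v], of "norm z"] R[of v] by auto
  qed simp_all
  moreover have "(\<lambda>v. indicator (cball 0 r) v *\<^sub>R (if 0 \<le> v \<bullet> z then U v \<bullet> z else 0))
      = (\<lambda>v. if 0 \<le> v \<bullet> z then U v \<bullet> z else 0)"
    using r by (force simp: fun_eq_iff split: split_indicator)
  ultimately show ?thesis
    unfolding set_integrable_def by simp
qed

lemma compact_weights_add:
  assumes "compact_weights U" "compact_weights V"
  shows "compact_weights (\<lambda>v. U v + V v)"
proof -
  obtain R r where "\<And>v. norm (U v) \<le> R" "\<And>v. r < norm v \<Longrightarrow> U v = 0" "U \<in> borel_measurable borel"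
    using assms(1) unfolding compact_weights_def by blast
  moreover obtain R' r' where "\<And>v. norm (V v) \<le> R'" "\<And>v. r' < norm v \<Longrightarrow> V v = 0" "V \<in> borel_measurable borel"
    using assms(2) unfolding compact_weights_def by blast
  ultimately have "\<forall>v. norm (U v + V v) \<le> R + R'" "\<forall>v. max r r' < norm v \<longrightarrow> U v + V v = 0"
    and "(\<lambda>v. U v + V v) \<in> borel_measurable borel"
    by (auto intro: norm_triangle_mono)
  then show ?thesis unfolding compact_weights_def by blast
qed

lemma infnet_add:
  assumes "compact_weights U" "compact_weights V"
  shows "infnet (\<lambda>v. U v + V v) z = infnet U z + infnet V z"
proof -
  have "infnet (\<lambda>v. U v + V v) z
      = (\<integral>v. (if 0 \<le> v \<bullet> z then U v \<bullet> z else 0) + (if 0 \<le> v \<bullet> z then V v \<bullet> z else 0) \<partial>std_gauss)"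
    unfolding infnet_def by (intro Bochner_Integration.integral_cong) (auto simp: inner_add_left)
  also have "\<dots> = infnet U z + infnet V z"
    unfolding infnet_def by (intro Bochner_Integration.integral_add integrable_infnet_integrand assms)
  finally show ?thesis .
qed

lemma compact_weights_scaleR:
  assumes "compact_weights U"
  shows "compact_weights (\<lambda>v. c *\<^sub>R U v)"
proof -
  obtain R r where "\<And>v. norm (U v) \<le> R" "\<And>v. r < norm v \<Longrightarrow> U v = 0" "U \<in> borel_measurable borel"
    using assms unfolding compact_weights_def by blast
  then have "\<forall>v. norm (c *\<^sub>R U v) \<le> \<bar>c\<bar> * R" "\<forall>v. r < norm v \<longrightarrow> c *\<^sub>R U v = 0"
    and "(\<lambda>v. c *\<^sub>R U v) \<in> borel_measurable borel"
    by (auto intro: mult_left_mono)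
  then show ?thesis unfolding compact_weights_def by blast
qed

lemma infnet_scaleR: "infnet (\<lambda>v. c *\<^sub>R U v) z = c * infnet U z"
proof -
  have "infnet (\<lambda>v. c *\<^sub>R U v) z = (\<integral>v. c * (if 0 \<le> v \<bullet> z then U v \<bullet> z else 0) \<partial>std_gauss)"
    unfolding infnet_def by (intro Bochner_Integration.integral_cong) auto
  then show ?thesis unfolding infnet_def by simp
qed

lemma set_average_dist_le:
  fixes f :: "'a \<Rightarrow> real"
  assumes B: "B \<in> sets M" "emeasure M B < \<infinity>" "measure M B > 0"
    and f: "set_integrable M B f"
    and close: "\<And>v. v \<in> B \<Longrightarrow> \<bar>f v - c\<bar> \<le> e"
  shows "\<bar>(\<integral>v\<in>B. f v \<partial>M) / measure M B - c\<bar> \<le> e"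
proof -
  have const: "set_integrable M B (\<lambda>_. a)" for a :: real
    using B unfolding set_integrable_def by (intro integrable_scaleR_left) auto
  have "(\<integral>v\<in>B. f v - c \<partial>M) \<le> (\<integral>v\<in>B. e \<partial>M)" "(\<integral>v\<in>B. c - f v \<partial>M) \<le> (\<integral>v\<in>B. e \<partial>M)"
    by (intro set_integral_mono; use f const close in \<open>force simp: abs_le_iff\<close>)+
  then have "\<bar>(\<integral>v\<in>B. f v \<partial>M) - measure M B * c\<bar> \<le> measure M B * e"
    using f const B by (simp add: set_integral_const abs_le_iff)
  moreover have "(\<integral>v\<in>B. f v \<partial>M) / measure M B - c = ((\<integral>v\<in>B. f v \<partial>M) - measure M B * c) / measure M B"
    using B(3) by (simp add: field_simps)
  ultimately show ?thesis
    using B(3) by (simp add: abs_divide divide_le_eq mult.commute)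
qed

lemma infnet_approx_relu:
  fixes u :: "'b::euclidean_space"
  assumes "r > 0"
  obtains U where "compact_weights U" "\<And>z. \<bar>infnet U z - max 0 (u \<bullet> z)\<bar> \<le> r * norm z"
proof -
  define B where "B = ball u r"
  define m where "m = measure std_gauss B"
  have B: "B \<in> sets std_gauss" "emeasure std_gauss B < \<infinity>"
    unfolding B_def by (simp, rule emeasure_std_gauss_bounded_finite) auto
  have m: "m > 0"
    using emeasure_std_gauss_ball_pos[OF assms, of u] B
    by (simp add: m_def B_def emeasure_eq_ennreal_measure less_top)
  have norm_B: "norm v \<le> norm u + r" if "v \<in> B" for v
    using that norm_triangle_sub[of v u] by (simp add: B_def dist_norm norm_minus_commute)
  define U where "U v = (indicator B v / m) *\<^sub>R v" for v
  have "compact_weights U"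
    unfolding compact_weights_def
  proof (intro conjI exI allI impI)
    show "U \<in> borel_measurable borel"
      using B(1) unfolding U_def by (auto intro!: borel_measurable_scaleR borel_measurable_indicator)
    show "norm (U v) \<le> (norm u + r) / m" for v
      using norm_B[of v] m assms by (auto simp: U_def divide_right_mono split: split_indicator)
    show "U v = 0" if "norm u + r < norm v" for v
      using norm_B[of v] that by (auto simp: U_def split: split_indicator)
  qed
  moreover have "\<bar>infnet U z - max 0 (u \<bullet> z)\<bar> \<le> r * norm z" for z
  proof -
    have "infnet U z = (\<integral>v. indicator B v * max 0 (v \<bullet> z) / m \<partial>std_gauss)"
      unfolding infnet_def U_def by (intro Bochner_Integration.integral_cong) (simp_all split: split_indicator)
    also have "\<dots> = (\<integral>v\<in>B. max 0 (v \<bullet> z) \<partial>std_gauss) / m"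
      unfolding set_lebesgue_integral_def by (simp only: real_scaleR_def integral_divide_zero)
    also have "\<bar>\<dots> - max 0 (u \<bullet> z)\<bar> \<le> r * norm z"
    proof (rule set_average_dist_le[of B std_gauss, folded m_def])
      show "set_integrable std_gauss B (\<lambda>v. max 0 (v \<bullet> z))"
      proof (rule set_integrable_std_gauss_bounded[where C = "(norm u + r) * norm z"])
        show "(\<lambda>v. max 0 (v \<bullet> z)) \<in> borel_measurable borel"
          by (intro borel_measurable_continuous_onI continuous_intros)
        show "\<bar>max 0 (v \<bullet> z)\<bar> \<le> (norm u + r) * norm z" if "v \<in> B" for v
          using Cauchy_Schwarz_ineq2[of v z] mult_right_mono[OF norm_B[OF that] norm_ge_zero[of z]] by arith
      qed (simp_all add: B_def)
      show "\<bar>max 0 (v \<bullet> z) - max 0 (u \<bullet> z)\<bar> \<le> r * norm z" if "v \<in> B" for v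
      proof -
        have "\<bar>max 0 (v \<bullet> z) - max 0 (u \<bullet> z)\<bar> \<le> \<bar>(v - u) \<bullet> z\<bar>"
          by (simp add: inner_diff_left)
        also have "\<dots> \<le> norm (v - u) * norm z"
          by (rule Cauchy_Schwarz_ineq2)
        also have "\<dots> \<le> r * norm z"
          using that by (intro mult_right_mono) (auto simp: B_def dist_norm norm_minus_commute)
        finally show ?thesis .
      qed
    qed (use B m in auto)
    finally show ?thesis .
  qed
  ultimately show ?thesis using that by blast
qed

section \<open>Functions approximable on the unit ball\<close>

lemma norm_lift_le_1:
  fixes x :: "'a::euclidean_space"
  assumes "norm x \<le> 1"
  shows "norm (lift x) \<le> 1"
proof -
  have "(norm x)\<^sup>2 + 1 \<le> 2"
    using assms by (simp add: power_le_one)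
  then have "norm (x, 1::real) \<le> sqrt 2"
    by (simp add: norm_Pair)
  moreover have "norm (lift x) = norm (x, 1::real) / sqrt 2"
    unfolding lift_def by (simp only: norm_scaleR) simp
  ultimately show ?thesis
    by (simp add: divide_le_eq)
qed

lemma inner_lift: "(sqrt 2 *\<^sub>R \<alpha>, sqrt 2 * \<beta>) \<bullet> lift x = \<alpha> \<bullet> x + \<beta>"
  unfolding lift_def by (simp add: inner_Pair)

definition net_approximable :: "('a::euclidean_space \<Rightarrow> real) \<Rightarrow> bool" where
  "net_approximable g \<longleftrightarrow> (\<forall>\<delta>>0. \<exists>U :: 'a \<times> real \<Rightarrow> 'a \<times> real.
     compact_weights U \<and> (\<forall>x\<in>cball 0 1. \<bar>g x - infnet U (lift x)\<bar> \<le> \<delta>))"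

lemma net_approximable_uniform_limit:
  assumes "\<And>\<delta>. \<delta> > 0 \<Longrightarrow> \<exists>f. net_approximable f \<and> (\<forall>x\<in>cball 0 1. \<bar>g x - f x\<bar> \<le> \<delta>)"
  shows "net_approximable g"
  unfolding net_approximable_def
proof (intro allI impI)
  fix \<delta> :: real
  assume "\<delta> > 0"
  then obtain f U where gf: "\<forall>x\<in>cball 0 1. \<bar>g x - f x\<bar> \<le> \<delta> / 2" and "compact_weights U"
    and fU: "\<forall>x\<in>cball 0 1. \<bar>f x - infnet U (lift x)\<bar> \<le> \<delta> / 2"
    using assms[of "\<delta> / 2"] unfolding net_approximable_def by (meson half_gt_zero)
  have "\<bar>g x - infnet U (lift x)\<bar> \<le> \<delta>" if "x \<in> cball 0 1" for x
    using gf[rule_format, OF that] fU[rule_format, OF that] by arith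
  then show "\<exists>U. compact_weights U \<and> (\<forall>x\<in>cball 0 1. \<bar>g x - infnet U (lift x)\<bar> \<le> \<delta>)"
    using \<open>compact_weights U\<close> by blast
qed

lemma net_approximable_add:
  assumes "net_approximable f" "net_approximable g"
  shows "net_approximable (\<lambda>x. f x + g x)"
  unfolding net_approximable_def
proof (intro allI impI)
  fix \<delta> :: real
  assume "\<delta> > 0"
  then obtain U V where UV: "compact_weights U" "compact_weights V"
    and fU: "\<forall>x\<in>cball 0 1. \<bar>f x - infnet U (lift x)\<bar> \<le> \<delta> / 2"
    and gV: "\<forall>x\<in>cball 0 1. \<bar>g x - infnet V (lift x)\<bar> \<le> \<delta> / 2"
    using assms unfolding net_approximable_def by (meson half_gt_zero)
  have "\<bar>f x + g x - infnet (\<lambda>v. U v + V v) (lift x)\<bar> \<le> \<delta>" if "x \<in> cball 0 1" for x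
    using fU[rule_format, OF that] gV[rule_format, OF that] unfolding infnet_add[OF UV] by arith
  then show "\<exists>W. compact_weights W \<and> (\<forall>x\<in>cball 0 1. \<bar>f x + g x - infnet W (lift x)\<bar> \<le> \<delta>)"
    using compact_weights_add[OF UV] by blast
qed

lemma net_approximable_cmult:
  assumes "net_approximable f"
  shows "net_approximable (\<lambda>x. c * f x)"
  unfolding net_approximable_def
proof (intro allI impI)
  fix \<delta> :: real
  assume "\<delta> > 0"
  then have "\<delta> / (\<bar>c\<bar> + 1) > 0" by simp
  then obtain U where U: "compact_weights U"
    and approx: "\<forall>x\<in>cball 0 1. \<bar>f x - infnet U (lift x)\<bar> \<le> \<delta> / (\<bar>c\<bar> + 1)"
    using assms unfolding net_approximable_def by blast
  have "\<bar>c * f x - infnet (\<lambda>v. c *\<^sub>R U v) (lift x)\<bar> \<le> \<delta>" if "x \<in> cball 0 1" for x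
  proof -
    have "\<bar>c * f x - infnet (\<lambda>v. c *\<^sub>R U v) (lift x)\<bar> = \<bar>c\<bar> * \<bar>f x - infnet U (lift x)\<bar>"
      by (simp add: infnet_scaleR right_diff_distrib flip: abs_mult)
    also have "\<dots> \<le> (\<bar>c\<bar> + 1) * (\<delta> / (\<bar>c\<bar> + 1))"
      using approx that by (intro mult_mono) auto
    finally show ?thesis by simp
  qed
  then show "\<exists>W. compact_weights W \<and> (\<forall>x\<in>cball 0 1. \<bar>c * f x - infnet W (lift x)\<bar> \<le> \<delta>)"
    using compact_weights_scaleR[OF U] by blast
qed

lemma net_approximable_relu: "net_approximable (\<lambda>x. max 0 (\<alpha> \<bullet> x + \<beta>))"
  unfolding net_approximable_def
proof (intro allI impI)
  fix \<delta> :: real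
  assume "\<delta> > 0"
  then obtain U where U: "compact_weights U"
    and approx: "\<And>z. \<bar>infnet U z - max 0 ((sqrt 2 *\<^sub>R \<alpha>, sqrt 2 * \<beta>) \<bullet> z)\<bar> \<le> \<delta> * norm z"
    using infnet_approx_relu[of \<delta> "(sqrt 2 *\<^sub>R \<alpha>, sqrt 2 * \<beta>)"] by blast
  have "\<bar>max 0 (\<alpha> \<bullet> x + \<beta>) - infnet U (lift x)\<bar> \<le> \<delta>" if "x \<in> cball 0 1" for x
  proof -
    have "\<bar>max 0 (\<alpha> \<bullet> x + \<beta>) - infnet U (lift x)\<bar> \<le> \<delta> * norm (lift x)"
      using approx[of "lift x"] by (simp add: inner_lift abs_minus_commute)
    also have "\<dots> \<le> \<delta>"
      using norm_lift_le_1[of x] that \<open>\<delta> > 0\<close> by (simp add: mult_left_le)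
    finally show ?thesis .
  qed
  then show "\<exists>U. compact_weights U \<and> (\<forall>x\<in>cball 0 1. \<bar>max 0 (\<alpha> \<bullet> x + \<beta>) - infnet U (lift x)\<bar> \<le> \<delta>)"
    using U by blast
qed

lemma net_approximable_const: "net_approximable (\<lambda>x. c)"
  using net_approximable_cmult[OF net_approximable_relu[of 0 1], of c] by simp

lemma net_approximable_sum:
  fixes n :: nat
  assumes "\<And>k. k < n \<Longrightarrow> net_approximable (f k)"
  shows "net_approximable (\<lambda>x. \<Sum>k<n. f k x)"
  using assms by (induction n) (simp_all add: net_approximable_const net_approximable_add)

lemma net_approximable_diff:
  assumes "net_approximable f" "net_approximable g"
  shows "net_approximable (\<lambda>x. f x - g x)"
  using net_approximable_add[OF assms(1) net_approximable_cmult[OF assms(2), of "-1"]] by simp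

lemma net_approximable_relu_interp: "net_approximable (\<lambda>x. relu_interp \<phi> a h n (w \<bullet> x))"
proof -
  have ramp: "net_approximable (\<lambda>x. max 0 (w \<bullet> x - c))" for c
    using net_approximable_relu[of w "- c"] by simp
  show ?thesis
    unfolding relu_interp_def
    by (intro net_approximable_add net_approximable_const net_approximable_sum net_approximable_cmult
        net_approximable_diff ramp)
qed

lemma net_approximable_lipschitz_ridge:
  assumes lip: "L-lipschitz_on {-T..T} \<phi>" and "T > 0"
    and bound: "\<And>x. x \<in> cball 0 1 \<Longrightarrow> \<bar>w \<bullet> x\<bar> \<le> T"
  shows "net_approximable (\<lambda>x. \<phi> (w \<bullet> x))"
proof (rule net_approximable_uniform_limit)
  fix \<delta> :: real
  assume "\<delta> > 0"
  obtain n :: nat where n: "4 * L * T / \<delta> < n"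
    using reals_Archimedean2 by blast
  have "0 \<le> 4 * L * T / \<delta>"
    using lipschitz_on_nonneg[OF lip] \<open>T > 0\<close> \<open>\<delta> > 0\<close> by simp
  then have "n > 0" using n by linarith
  define h where "h = 2 * T / n"
  have "h > 0" "- T + real n * h = T"
    using \<open>n > 0\<close> \<open>T > 0\<close> by (simp_all add: h_def)
  have "\<bar>\<phi> (w \<bullet> x) - relu_interp \<phi> (- T) h n (w \<bullet> x)\<bar> \<le> \<delta>" if "x \<in> cball 0 1" for x
  proof -
    have "\<bar>\<phi> (w \<bullet> x) - relu_interp \<phi> (- T) h n (w \<bullet> x)\<bar> \<le> 2 * L * h"
      using relu_interp_error[of L "- T" n h \<phi> "w \<bullet> x"] lip \<open>h > 0\<close> \<open>n > 0\<close> bound[OF that]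
        \<open>- T + real n * h = T\<close> by (simp add: abs_le_iff)
    also have "\<dots> \<le> \<delta>"
      using n \<open>n > 0\<close> \<open>\<delta> > 0\<close> by (simp add: h_def field_simps)
    finally show ?thesis .
  qed
  then show "\<exists>f. net_approximable f \<and> (\<forall>x\<in>cball 0 1. \<bar>\<phi> (w \<bullet> x) - f x\<bar> \<le> \<delta>)"
    using net_approximable_relu_interp by blast
qed

lemma lipschitz_on_exp: "(exp T)-lipschitz_on {..T} exp"
proof (rule lipschitz_onI)
  have increase: "exp b - exp a \<le> exp T * (b - a)" if "a \<le> b" "b \<le> T" for a b :: real
  proof -
    have "exp b - exp a \<le> exp b * (b - a)"
      using exp_ge_add_one_self[of "a - b"] mult_left_mono[of "1 + (a - b)" "exp (a - b)" "exp b"]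
      by (simp add: exp_diff algebra_simps)
    also have "\<dots> \<le> exp T * (b - a)"
      using that by (intro mult_right_mono) auto
    finally show ?thesis .
  qed
  show "dist (exp s) (exp t) \<le> exp T * dist s t" if "s \<in> {..T}" "t \<in> {..T}" for s t
    using that increase[of s t] increase[of t s] by (cases "s \<le> t") (auto simp: dist_real_def)
qed simp

lemma net_approximable_exp_ridge: "net_approximable (\<lambda>x. exp (w \<bullet> x))"
proof (rule net_approximable_lipschitz_ridge)
  show "(exp (norm w + 1))-lipschitz_on {- (norm w + 1)..norm w + 1} exp"
    by (rule lipschitz_on_subset[OF lipschitz_on_exp]) auto
  show "\<bar>w \<bullet> x\<bar> \<le> norm w + 1" if "x \<in> cball 0 1" for x
    using Cauchy_Schwarz_ineq2[of w x] mult_left_le[of "norm x" "norm w"] that by simp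
qed (simp add: add_nonneg_pos)

inductive_set exp_span :: "('a::euclidean_space \<Rightarrow> real) set" where
  exp_ridge: "(\<lambda>x. exp (w \<bullet> x)) \<in> exp_span"
| add: "f \<in> exp_span \<Longrightarrow> g \<in> exp_span \<Longrightarrow> (\<lambda>x. f x + g x) \<in> exp_span"
| cmult: "f \<in> exp_span \<Longrightarrow> (\<lambda>x. c * f x) \<in> exp_span"

lemma exp_span_const: "(\<lambda>x. c) \<in> exp_span"
  using exp_span.cmult[OF exp_span.exp_ridge[of 0], of c] by simp

lemma exp_span_mult_exp_ridge: "g \<in> exp_span \<Longrightarrow> (\<lambda>x. exp (w \<bullet> x) * g x) \<in> exp_span"
proof (induction g rule: exp_span.induct)
  case (exp_ridge v)
  then show ?case
    using exp_span.exp_ridge[of "w + v"] by (simp add: inner_add_left exp_add)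
next
  case (add f g)
  then show ?case
    using exp_span.add[OF add.IH] by (simp add: distrib_left)
next
  case (cmult f c)
  then show ?case
    using exp_span.cmult[OF cmult.IH, of c] by (simp add: mult.left_commute)
qed

lemma exp_span_mult: "f \<in> exp_span \<Longrightarrow> g \<in> exp_span \<Longrightarrow> (\<lambda>x. f x * g x) \<in> exp_span"
proof (induction f rule: exp_span.induct)
  case (exp_ridge w)
  then show ?case by (rule exp_span_mult_exp_ridge)
next
  case (add f1 f2)
  then show ?case
    using exp_span.add[OF add.IH] by (simp add: distrib_right)
next
  case (cmult f c)
  then show ?case
    using exp_span.cmult[OF cmult.IH, of c] by (simp add: mult.assoc)
qed

lemma continuous_on_exp_span: "f \<in> exp_span \<Longrightarrow> continuous_on S f"
  by (induction f rule: exp_span.induct) (auto intro!: continuous_intros)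

lemma net_approximable_exp_span: "f \<in> exp_span \<Longrightarrow> net_approximable f"
  by (induction f rule: exp_span.induct)
    (auto intro: net_approximable_exp_ridge net_approximable_add net_approximable_cmult)

lemma net_approximable_continuous:
  fixes g :: "'a::euclidean_space \<Rightarrow> real"
  assumes "continuous_on (cball 0 1) g"
  shows "net_approximable g"
proof -
  interpret function_ring_on "exp_span :: ('a \<Rightarrow> real) set" "cball 0 1"
  proof
    show "\<exists>f\<in>exp_span. f x \<noteq> f y" if "x \<noteq> y" for x y :: 'a
    proof
      show "(\<lambda>z. exp ((x - y) \<bullet> z)) \<in> exp_span"
        by (rule exp_span.exp_ridge)
      have "(x - y) \<bullet> x - (x - y) \<bullet> y > 0"
        using that by (simp flip: inner_diff_right)
      then show "exp ((x - y) \<bullet> x) \<noteq> exp ((x - y) \<bullet> y)"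
        by simp
    qed
  qed (auto intro: continuous_on_exp_span exp_span.add exp_span_mult exp_span_const)
  show ?thesis
  proof (rule net_approximable_uniform_limit)
    fix \<delta> :: real
    assume "\<delta> > 0"
    then obtain f where "f \<in> exp_span" "\<forall>x\<in>cball 0 1. \<bar>g x - f x\<bar> < \<delta>"
      using Stone_Weierstrass_basic[OF assms] by blast
    then show "\<exists>f. net_approximable f \<and> (\<forall>x\<in>cball 0 1. \<bar>g x - f x\<bar> \<le> \<delta>)"
      using net_approximable_exp_span by (meson less_imp_le)
  qed
qed

section \<open>Continuous functions are dense in L1\<close>

lemma regular_compact_open_approx:
  fixes \<nu> :: "'a::euclidean_space measure"
  assumes "sets \<nu> = sets borel" "finite_measure \<nu>" "A \<in> sets borel" "\<delta> > 0"
  obtains K G where "compact K" "open G" "K \<subseteq> A" "A \<subseteq> G" "measure \<nu> (G - K) \<le> \<delta>"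
proof -
  interpret finite_measure \<nu> by (rule assms(2))
  have fin: "emeasure \<nu> (space \<nu>) \<noteq> \<infinity>" by simp
  have "\<delta> / 2 > 0" using assms(4) by simp
  have "{K. K \<subseteq> A \<and> compact K} \<noteq> {}"
    using compact_empty by blast
  then obtain K where K: "K \<subseteq> A" "compact K" "emeasure \<nu> A < emeasure \<nu> K + ennreal (\<delta> / 2)"
    using SUP_approx_ennreal[OF \<open>\<delta> / 2 > 0\<close> _ inner_regular[OF assms(1) fin assms(3)]
        emeasure_finite[folded infinity_ennreal_def]]
    by blast
  obtain G where G: "A \<subseteq> G" "open G" "emeasure \<nu> G < emeasure \<nu> A + ennreal (\<delta> / 2)"
    using INF_approx_ennreal[OF \<open>\<delta> / 2 > 0\<close> outer_regular[OF assms(1) fin assms(3)]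
        emeasure_finite[folded infinity_ennreal_def]]
    by blast
  have sets: "K \<in> sets \<nu>" "G \<in> sets \<nu>" "A \<in> sets \<nu>"
    using K(2) G(2) assms(1,3) by (simp_all add: compact_imp_closed)
  have "measure \<nu> A < measure \<nu> K + \<delta> / 2" "measure \<nu> G < measure \<nu> A + \<delta> / 2"
    using K(3) G(3) assms(4)
    by (simp_all add: emeasure_eq_measure ennreal_less_iff flip: ennreal_plus)
  then have "measure \<nu> (G - K) \<le> \<delta>"
    using finite_measure_Diff[OF sets(2,1)] K(1) G(1) by simp
  then show ?thesis
    using that K G by blast
qed

lemma continuous_approx_indicator_L1:
  fixes \<nu> :: "'a::euclidean_space measure"
  assumes "sets \<nu> = sets borel" "finite_measure \<nu>" "A \<in> sets borel" "\<delta> > 0"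
  obtains h where "continuous_on UNIV h" "(\<integral>\<^sup>+ x. ennreal \<bar>indicator A x - h x\<bar> \<partial>\<nu>) \<le> ennreal \<delta>"
proof -
  interpret finite_measure \<nu> by (rule assms(2))
  obtain K G where KG: "compact K" "open G" "K \<subseteq> A" "A \<subseteq> G" "measure \<nu> (G - K) \<le> \<delta>"
    using regular_compact_open_approx[OF assms] .
  obtain h :: "'a \<Rightarrow> real" where h: "continuous_on UNIV h" "\<And>x. h x \<in> closed_segment 0 1"
    "\<And>x. x \<in> - G \<Longrightarrow> h x = 0" "\<And>x. x \<in> K \<Longrightarrow> h x = 1"
    using Urysohn[of "- G" K 0 1] KG by (auto simp: compact_imp_closed)
  have "(\<integral>\<^sup>+ x. ennreal \<bar>indicator A x - h x\<bar> \<partial>\<nu>) \<le> (\<integral>\<^sup>+ x. indicator (G - K) x \<partial>\<nu>)"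
  proof (intro nn_integral_mono)
    fix x
    have "\<bar>indicator A x - h x\<bar> \<le> indicator (G - K) x"
      using h(2-4)[of x] KG(3,4) by (auto simp: closed_segment_eq_real_ivl split: split_indicator)
    then show "ennreal \<bar>indicator A x - h x\<bar> \<le> indicator (G - K) x"
      unfolding ennreal_indicator[symmetric] by (rule ennreal_leI)
  qed
  also have "\<dots> = ennreal (measure \<nu> (G - K))"
    using KG(1,2) assms(1) by (simp add: compact_imp_closed emeasure_eq_measure)
  also have "\<dots> \<le> ennreal \<delta>"
    using KG(5) by (rule ennreal_leI)
  finally show ?thesis
    using that h(1) by blast
qed

lemma nn_integral_abs_diff_triangle:
  fixes f g h :: "'a \<Rightarrow> real"
  assumes "f \<in> borel_measurable M" "g \<in> borel_measurable M" "h \<in> borel_measurable M"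
  shows "(\<integral>\<^sup>+ x. ennreal \<bar>f x - h x\<bar> \<partial>M) \<le> (\<integral>\<^sup>+ x. ennreal \<bar>f x - g x\<bar> \<partial>M) + (\<integral>\<^sup>+ x. ennreal \<bar>g x - h x\<bar> \<partial>M)"
proof -
  have "(\<integral>\<^sup>+ x. ennreal \<bar>f x - h x\<bar> \<partial>M) \<le> (\<integral>\<^sup>+ x. ennreal \<bar>f x - g x\<bar> + ennreal \<bar>g x - h x\<bar> \<partial>M)"
    by (intro nn_integral_mono) (simp flip: ennreal_plus)
  also have "\<dots> = (\<integral>\<^sup>+ x. ennreal \<bar>f x - g x\<bar> \<partial>M) + (\<integral>\<^sup>+ x. ennreal \<bar>g x - h x\<bar> \<partial>M)"
    using assms by (intro nn_integral_add) auto
  finally show ?thesis .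
qed

lemma continuous_dense_L1:
  fixes \<nu> :: "'a::euclidean_space measure" and f :: "'a \<Rightarrow> real"
  assumes sets: "sets \<nu> = sets borel" and "finite_measure \<nu>" and "integrable \<nu> f" and "\<delta> > 0"
  obtains h where "continuous_on UNIV h" "(\<integral>\<^sup>+ x. ennreal \<bar>f x - h x\<bar> \<partial>\<nu>) \<le> ennreal \<delta>"
proof -
  have meas: "h \<in> borel_measurable \<nu>" if "continuous_on UNIV h" for h :: "'a \<Rightarrow> real"
    using that by (simp add: measurable_cong_sets[OF sets refl] borel_measurable_continuous_onI)
  have "\<forall>\<delta>>0. \<exists>h. continuous_on UNIV h \<and> (\<integral>\<^sup>+ x. ennreal \<bar>f x - h x\<bar> \<partial>\<nu>) \<le> ennreal \<delta>"
    using \<open>integrable \<nu> f\<close>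
  proof (induction rule: integrable_induct)
    case (base A c)
    show ?case
    proof (intro allI impI)
      fix \<delta> :: real
      assume "\<delta> > 0"
      then have "\<delta> / (\<bar>c\<bar> + 1) > 0" by simp
      moreover have "A \<in> sets borel" using base sets by simp
      ultimately obtain h where h: "continuous_on UNIV h"
        and close: "(\<integral>\<^sup>+ x. ennreal \<bar>indicator A x - h x\<bar> \<partial>\<nu>) \<le> ennreal (\<delta> / (\<bar>c\<bar> + 1))"
        using continuous_approx_indicator_L1[OF sets \<open>finite_measure \<nu>\<close>] by blast
      have "(\<integral>\<^sup>+ x. ennreal \<bar>indicator A x *\<^sub>R c - h x * c\<bar> \<partial>\<nu>)
          = (\<integral>\<^sup>+ x. ennreal \<bar>indicator A x - h x\<bar> * ennreal \<bar>c\<bar> \<partial>\<nu>)"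
        by (intro nn_integral_cong) (simp add: left_diff_distrib flip: abs_mult ennreal_mult)
      also have "\<dots> = (\<integral>\<^sup>+ x. ennreal \<bar>indicator A x - h x\<bar> \<partial>\<nu>) * ennreal \<bar>c\<bar>"
        using base(1) meas[OF h] by (intro nn_integral_multc) auto
      also have "\<dots> \<le> ennreal (\<delta> / (\<bar>c\<bar> + 1)) * ennreal (\<bar>c\<bar> + 1)"
        using close by (intro mult_mono) auto
      also have "\<dots> = ennreal \<delta>"
        using \<open>\<delta> > 0\<close> by (subst ennreal_mult[symmetric]) auto
      finally show "\<exists>h. continuous_on UNIV h \<and> (\<integral>\<^sup>+ x. ennreal \<bar>indicator A x *\<^sub>R c - h x\<bar> \<partial>\<nu>) \<le> ennreal \<delta>"
        using h by (intro exI[of _ "\<lambda>x. h x * c"]) (auto intro!: continuous_intros)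
    qed
  next
    case (add f g)
    show ?case
    proof (intro allI impI)
      fix \<delta> :: real
      assume "\<delta> > 0"
      then obtain h1 h2 where h: "continuous_on UNIV h1" "continuous_on UNIV h2"
        and h1: "(\<integral>\<^sup>+ x. ennreal \<bar>f x - h1 x\<bar> \<partial>\<nu>) \<le> ennreal (\<delta> / 2)"
        and h2: "(\<integral>\<^sup>+ x. ennreal \<bar>g x - h2 x\<bar> \<partial>\<nu>) \<le> ennreal (\<delta> / 2)"
        using add.IH by (meson half_gt_zero)
      have "(\<integral>\<^sup>+ x. ennreal \<bar>f x + g x - (h1 x + h2 x)\<bar> \<partial>\<nu>)
          \<le> (\<integral>\<^sup>+ x. ennreal \<bar>f x - h1 x\<bar> \<partial>\<nu>) + (\<integral>\<^sup>+ x. ennreal \<bar>g x - h2 x\<bar> \<partial>\<nu>)"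
        using nn_integral_abs_diff_triangle[of "\<lambda>x. f x + g x" \<nu> "\<lambda>x. h1 x + g x" "\<lambda>x. h1 x + h2 x"]
          add.hyps[THEN borel_measurable_integrable] meas[OF h(1)] meas[OF h(2)] by simp
      also have "\<dots> \<le> ennreal (\<delta> / 2) + ennreal (\<delta> / 2)"
        using h1 h2 by (rule add_mono)
      also have "\<dots> = ennreal \<delta>"
        using \<open>\<delta> > 0\<close> by (simp flip: ennreal_plus)
      finally have "(\<integral>\<^sup>+ x. ennreal \<bar>f x + g x - (h1 x + h2 x)\<bar> \<partial>\<nu>) \<le> ennreal \<delta>" .
      then show "\<exists>h. continuous_on UNIV h \<and> (\<integral>\<^sup>+ x. ennreal \<bar>f x + g x - h x\<bar> \<partial>\<nu>) \<le> ennreal \<delta>"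
        using h by (intro exI[of _ "\<lambda>x. h1 x + h2 x"]) (auto intro!: continuous_intros)
    qed
  next
    case (lim f s)
    show ?case
    proof (intro allI impI)
      fix \<delta> :: real
      assume "\<delta> > 0"
      have f: "f \<in> borel_measurable \<nu>" and s: "\<And>i. s i \<in> borel_measurable \<nu>"
        using lim(1,4) by (simp_all add: borel_measurable_integrable)
      have "(\<lambda>i. \<integral>\<^sup>+ x. norm (f x - s i x) \<partial>\<nu>) \<longlonglongrightarrow> 0"
      proof (rule nn_integral_dominated_convergence_norm[where w = "\<lambda>x. 2 * norm (f x)"])
        have "(\<integral>\<^sup>+ x. ennreal (norm (f x)) \<partial>\<nu>) < \<infinity>"
          using lim(4) by (simp add: integrable_iff_bounded)
        then show "(\<integral>\<^sup>+ x. ennreal (2 * norm (f x)) \<partial>\<nu>) < \<infinity>"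
          using f by (simp add: ennreal_mult nn_integral_cmult ennreal_mult_less_top)
        show "AE x in \<nu>. norm (s j x) \<le> 2 * norm (f x)" for j
          using lim(3) by (intro AE_I2)
        show "AE x in \<nu>. (\<lambda>i. s i x) \<longlonglongrightarrow> f x"
          using lim(2) by (intro AE_I2)
      qed (use f s in simp_all)
      then have "eventually (\<lambda>i. (\<integral>\<^sup>+ x. norm (f x - s i x) \<partial>\<nu>) < ennreal (\<delta> / 2)) sequentially"
        by (rule order_tendstoD(2)) (use \<open>\<delta> > 0\<close> in simp)
      then obtain i where i: "(\<integral>\<^sup>+ x. ennreal \<bar>f x - s i x\<bar> \<partial>\<nu>) < ennreal (\<delta> / 2)"
        unfolding eventually_sequentially real_norm_def by blast
      obtain h where h: "continuous_on UNIV h" "(\<integral>\<^sup>+ x. ennreal \<bar>s i x - h x\<bar> \<partial>\<nu>) \<le> ennreal (\<delta> / 2)"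
        using lim.IH \<open>\<delta> > 0\<close> by (meson half_gt_zero)
      have "(\<integral>\<^sup>+ x. ennreal \<bar>f x - h x\<bar> \<partial>\<nu>)
          \<le> (\<integral>\<^sup>+ x. ennreal \<bar>f x - s i x\<bar> \<partial>\<nu>) + (\<integral>\<^sup>+ x. ennreal \<bar>s i x - h x\<bar> \<partial>\<nu>)"
        using f s meas[OF h(1)] by (rule nn_integral_abs_diff_triangle)
      also have "\<dots> \<le> ennreal (\<delta> / 2) + ennreal (\<delta> / 2)"
        using i h(2) by (intro add_mono) auto
      also have "\<dots> = ennreal \<delta>"
        using \<open>\<delta> > 0\<close> by (simp flip: ennreal_plus)
      finally show "\<exists>h. continuous_on UNIV h \<and> (\<integral>\<^sup>+ x. ennreal \<bar>f x - h x\<bar> \<partial>\<nu>) \<le> ennreal \<delta>"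
        using h(1) by blast
    qed
  qed
  then show ?thesis
    using that \<open>\<delta> > 0\<close> by blast
qed

lemma continuous_approx_L1_marginal:
  fixes \<mu> :: "('a::euclidean_space \<times> 'b::euclidean_space) measure"
  assumes "finite_measure \<mu>" "sets \<mu> = sets borel" "f \<in> borel_measurable borel" "\<And>x. \<bar>f x\<bar> \<le> B" "\<delta> > 0"
  obtains h where "continuous_on UNIV h" "(\<integral>\<^sup>+ p. ennreal \<bar>f (fst p) - h (fst p)\<bar> \<partial>\<mu>) \<le> ennreal \<delta>"
proof -
  define \<nu> where "\<nu> = distr \<mu> borel fst"
  have fst: "fst \<in> measurable \<mu> borel"
    using assms(2) by (simp add: measurable_cong_sets[OF assms(2) refl] borel_measurable_continuous_onI continuous_on_fst)
  have "finite_measure \<nu>"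
    unfolding \<nu>_def using assms(1) fst by (intro finite_measure.finite_measure_distr)
  moreover have "sets \<nu> = sets borel"
    by (simp add: \<nu>_def)
  moreover have "integrable \<nu> f"
    using \<open>finite_measure \<nu>\<close>
  proof (rule finite_measure.integrable_const_bound[where B = B])
    show "f \<in> borel_measurable \<nu>"
      using assms(3) by (simp add: \<nu>_def)
  qed (use assms(4) in simp)
  ultimately obtain h where h: "continuous_on UNIV h" "(\<integral>\<^sup>+ x. ennreal \<bar>f x - h x\<bar> \<partial>\<nu>) \<le> ennreal \<delta>"
    using continuous_dense_L1 assms(5) by blast
  moreover have "(\<integral>\<^sup>+ x. ennreal \<bar>f x - h x\<bar> \<partial>\<nu>) = (\<integral>\<^sup>+ p. ennreal \<bar>f (fst p) - h (fst p)\<bar> \<partial>\<mu>)"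
    unfolding \<nu>_def using fst assms(3) borel_measurable_continuous_onI[OF h(1)] by (simp add: nn_integral_distr)
  ultimately show ?thesis
    using that by simp
qed

definition risk :: "('a \<times> real) measure \<Rightarrow> ('a \<Rightarrow> real) \<Rightarrow> ennreal" where
  "risk \<mu> g = (\<integral>\<^sup>+ p. ennreal (logloss (snd p * g (fst p))) \<partial>\<mu>)"

lemma riskU_eq_risk: "riskU \<mu> U = risk \<mu> (\<lambda>x. infnet U (lift x))"
  by (simp add: riskU_def risk_def)

lemma risk_opt_approx:
  assumes "prob_space \<mu>" "e > 0"
  obtains g where "g \<in> borel_measurable borel" "risk \<mu> g < risk_opt \<mu> + ennreal e"
proof -
  have opt: "risk_opt \<mu> = (INF g \<in> borel_measurable borel. risk \<mu> g)"
    unfolding risk_opt_def risk_def ..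
  have "risk_opt \<mu> \<le> risk \<mu> (\<lambda>_. 0)"
    unfolding opt by (rule INF_lower) simp
  also have "\<dots> = ennreal (ln 2)"
    using assms(1) by (simp add: risk_def logloss_def prob_space.emeasure_space_1)
  finally have "risk_opt \<mu> \<noteq> \<infinity>"
    by (metis ennreal_neq_top infinity_ennreal_def neq_top_trans)
  then show ?thesis
    using INF_approx_ennreal[OF assms(2) opt] that by blast
qed

lemma ennreal_le_add_real:
  assumes "a \<le> b + c" "0 \<le> b" "0 \<le> c"
  shows "ennreal a \<le> ennreal b + ennreal c"
  using assms by (simp add: ennreal_leI flip: ennreal_plus)

lemma borel_measurable_risk_integrand:
  fixes g :: "'a::euclidean_space \<Rightarrow> real"
  assumes "sets M = sets borel" and [measurable]: "g \<in> borel_measurable borel"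
  shows "(\<lambda>p. ennreal (logloss (snd p * g (fst p)))) \<in> borel_measurable M"
  unfolding measurable_cong_sets[OF assms(1) refl] borel_prod[symmetric]
  by measurable

lemma risk_le_pointwise:
  fixes \<mu> :: "('a::euclidean_space \<times> real) measure"
  assumes "prob_space \<mu>" "sets \<mu> = sets borel" "g \<in> borel_measurable borel" "0 \<le> c"
    and "AE p in \<mu>. logloss (snd p * f (fst p)) \<le> logloss (snd p * g (fst p)) + c"
  shows "risk \<mu> f \<le> risk \<mu> g + ennreal c"
proof -
  have "risk \<mu> f \<le> (\<integral>\<^sup>+ p. ennreal (logloss (snd p * g (fst p))) + ennreal c \<partial>\<mu>)"
    unfolding risk_def using assms(5)
    by (rule nn_integral_mono_AE[OF eventually_mono]) (simp add: ennreal_le_add_real logloss_nonneg assms(4))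
  also have "\<dots> = risk \<mu> g + (\<integral>\<^sup>+ p. ennreal c \<partial>\<mu>)"
    unfolding risk_def using borel_measurable_risk_integrand[OF assms(2,3)] by (intro nn_integral_add) simp_all
  also have "(\<integral>\<^sup>+ p. ennreal c \<partial>\<mu>) = ennreal c"
    using assms(1) by (simp add: prob_space.emeasure_space_1)
  finally show ?thesis .
qed

lemma risk_le_L1:
  fixes \<mu> :: "('a::euclidean_space \<times> real) measure"
  assumes "sets \<mu> = sets borel" "AE p in \<mu>. snd p \<in> {-1, 1}"
    and "f \<in> borel_measurable borel" "g \<in> borel_measurable borel"
  shows "risk \<mu> f \<le> risk \<mu> g + (\<integral>\<^sup>+ p. ennreal \<bar>f (fst p) - g (fst p)\<bar> \<partial>\<mu>)"
proof -
  have "risk \<mu> f \<le> (\<integral>\<^sup>+ p. ennreal (logloss (snd p * g (fst p))) + ennreal \<bar>f (fst p) - g (fst p)\<bar> \<partial>\<mu>)"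
    unfolding risk_def using assms(2)
    by (rule nn_integral_mono_AE[OF eventually_mono])
      (simp add: ennreal_le_add_real logloss_nonneg logloss_label_lipschitz)
  also have "\<dots> = risk \<mu> g + (\<integral>\<^sup>+ p. ennreal \<bar>f (fst p) - g (fst p)\<bar> \<partial>\<mu>)"
  proof -
    have "(\<lambda>p. \<bar>f (fst p) - g (fst p)\<bar>) \<in> borel_measurable (borel \<Otimes>\<^sub>M borel)"
      using assms(3,4) by measurable
    then show ?thesis
      unfolding risk_def using borel_measurable_risk_integrand[OF assms(1,4)]
      by (intro nn_integral_add) (simp_all add: measurable_cong_sets[OF assms(1) refl] flip: borel_prod)
  qed
  finally show ?thesis .
qed

lemma risk_clamp:
  fixes \<mu> :: "('a::euclidean_space \<times> real) measure"
  assumes "prob_space \<mu>" "sets \<mu> = sets borel" "AE p in \<mu>. snd p \<in> {-1, 1}"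
    and "g \<in> borel_measurable borel" "0 \<le> M"
  shows "risk \<mu> (\<lambda>x. max (- M) (min M (g x))) \<le> risk \<mu> g + ennreal (exp (- M))"
  using assms(1,2,4) by (rule risk_le_pointwise)
    (use assms(3) in \<open>auto elim!: eventually_mono intro: logloss_label_clamp[OF _ assms(5)]\<close>)

lemma risk_le_uniform:
  fixes \<mu> :: "('a::euclidean_space \<times> real) measure"
  assumes "prob_space \<mu>" "sets \<mu> = sets borel" "AE p in \<mu>. snd p \<in> {-1, 1}"
    and "AE p in \<mu>. fst p \<in> S" "g \<in> borel_measurable borel" "0 \<le> e"
    and "\<And>x. x \<in> S \<Longrightarrow> \<bar>f x - g x\<bar> \<le> e"
  shows "risk \<mu> f \<le> risk \<mu> g + ennreal e"
  using assms(1,2,5,6)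
proof (rule risk_le_pointwise)
  show "AE p in \<mu>. logloss (snd p * f (fst p)) \<le> logloss (snd p * g (fst p)) + e"
    using assms(3,4)
  proof eventually_elim
    case (elim p)
    then show ?case
      using logloss_label_lipschitz[of "snd p" "f (fst p)" "g (fst p)"] assms(7)[of "fst p"] by simp
  qed
qed

lemma ennreal_half_add_half: "0 \<le> e \<Longrightarrow> ennreal (e / 2) + ennreal (e / 2) = ennreal e"
  by (simp flip: ennreal_plus)

lemma risk_opt_approx_bounded:
  fixes \<mu> :: "('a::euclidean_space \<times> real) measure"
  assumes "prob_space \<mu>" "sets \<mu> = sets borel" "AE p in \<mu>. snd p \<in> {-1, 1}" "e > 0"
  obtains g M where "g \<in> borel_measurable borel" "\<And>x. \<bar>g x\<bar> \<le> M" "risk \<mu> g \<le> risk_opt \<mu> + ennreal e"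
proof -
  obtain g where g: "g \<in> borel_measurable borel" "risk \<mu> g < risk_opt \<mu> + ennreal (e / 2)"
    using risk_opt_approx[OF assms(1) half_gt_zero[OF assms(4)]] .
  define M where "M = max 0 (- ln (e / 2))"
  define g\<^sub>M where "g\<^sub>M x = max (- M) (min M (g x))" for x
  have "0 \<le> M" by (simp add: M_def)
  have g\<^sub>M_meas: "g\<^sub>M \<in> borel_measurable borel"
    unfolding g\<^sub>M_def using g(1) by measurable
  have g\<^sub>M_bound: "\<bar>g\<^sub>M x\<bar> \<le> M" for x
    using \<open>0 \<le> M\<close> by (simp add: g\<^sub>M_def abs_le_iff)
  have "exp (- M) \<le> exp (ln (e / 2))"
    by (simp add: M_def)
  then have "exp (- M) \<le> e / 2"
    using assms(4) by simp
  then have "risk \<mu> g\<^sub>M \<le> risk \<mu> g + ennreal (e / 2)"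
    using risk_clamp[OF assms(1-3) g(1) \<open>0 \<le> M\<close>] unfolding g\<^sub>M_def
    by (meson add_left_mono ennreal_leI order_trans)
  also have "\<dots> \<le> risk_opt \<mu> + ennreal (e / 2) + ennreal (e / 2)"
    using g(2) by (intro add_right_mono) simp
  also have "\<dots> = risk_opt \<mu> + ennreal e"
    using assms(4) by (simp add: add.assoc ennreal_half_add_half)
  finally show ?thesis
    by (rule that[OF g\<^sub>M_meas g\<^sub>M_bound])
qed

lemma risk_opt_approx_continuous:
  fixes \<mu> :: "('a::euclidean_space \<times> real) measure"
  assumes "prob_space \<mu>" "sets \<mu> = sets borel" "AE p in \<mu>. snd p \<in> {-1, 1}" "e > 0"
  obtains h where "continuous_on UNIV h" "risk \<mu> h \<le> risk_opt \<mu> + ennreal e"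
proof -
  obtain g M where g: "g \<in> borel_measurable borel" "\<And>x. \<bar>g x\<bar> \<le> M"
    and risk_g: "risk \<mu> g \<le> risk_opt \<mu> + ennreal (e / 2)"
    using risk_opt_approx_bounded[OF assms(1-3) half_gt_zero[OF assms(4)]] by blast
  have fin: "finite_measure \<mu>"
    using assms(1) by (simp add: prob_space_def)
  obtain h where h: "continuous_on UNIV h" "(\<integral>\<^sup>+ p. ennreal \<bar>g (fst p) - h (fst p)\<bar> \<partial>\<mu>) \<le> ennreal (e / 2)"
    using continuous_approx_L1_marginal[OF fin assms(2) g half_gt_zero[OF assms(4)]] .
  have "risk \<mu> h \<le> risk \<mu> g + (\<integral>\<^sup>+ p. ennreal \<bar>h (fst p) - g (fst p)\<bar> \<partial>\<mu>)"
    using h(1) by (intro risk_le_L1[OF assms(2,3) _ g(1)] borel_measurable_continuous_onI)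
  also have "\<dots> \<le> risk_opt \<mu> + ennreal (e / 2) + ennreal (e / 2)"
    using risk_g h(2) by (intro add_mono) (simp_all add: abs_minus_commute)
  also have "\<dots> = risk_opt \<mu> + ennreal e"
    using assms(4) by (simp add: add.assoc ennreal_half_add_half)
  finally show ?thesis
    using that h(1) by blast
qed

theorem lemmaA12:
  fixes \<mu> :: "('a::euclidean_space \<times> real) measure" and \<epsilon> :: real
  assumes "prob_space \<mu>"
    and "sets \<mu> = sets borel"
    and "AE p in \<mu>. snd p \<in> {-1, 1}"
    and "AE p in \<mu>. norm (fst p) \<le> 1"
    and "\<epsilon> > 0"
  shows "\<exists>U :: 'a \<times> real \<Rightarrow> 'a \<times> real.
           U \<in> borel_measurable borel \<and>
           (\<exists>R. \<forall>v. norm (U v) \<le> R) \<and>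
           riskU \<mu> U \<le> risk_opt \<mu> + ennreal \<epsilon>"
proof -
  obtain h where h: "continuous_on UNIV h" "risk \<mu> h \<le> risk_opt \<mu> + ennreal (\<epsilon> / 2)"
    using risk_opt_approx_continuous[OF assms(1-3) half_gt_zero[OF assms(5)]] .
  have "net_approximable h"
    using h(1) by (intro net_approximable_continuous) (rule continuous_on_subset, auto)
  then obtain U :: "'a \<times> real \<Rightarrow> 'a \<times> real" where U: "compact_weights U"
    and "\<forall>x\<in>cball 0 1. \<bar>h x - infnet U (lift x)\<bar> \<le> \<epsilon> / 2"
    using half_gt_zero[OF assms(5)] unfolding net_approximable_def by blast
  then have "riskU \<mu> U \<le> risk \<mu> h + ennreal (\<epsilon> / 2)"
    unfolding riskU_eq_risk using h(1) assms(4,5)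
    by (intro risk_le_uniform[OF assms(1-3), of "cball 0 1"] borel_measurable_continuous_onI)
      (auto simp: abs_minus_commute)
  also have "\<dots> \<le> risk_opt \<mu> + ennreal (\<epsilon> / 2) + ennreal (\<epsilon> / 2)"
    using h(2) by (rule add_right_mono)
  also have "\<dots> = risk_opt \<mu> + ennreal \<epsilon>"
    using assms(5) by (simp add: add.assoc ennreal_half_add_half)
  finally show ?thesis
    using U unfolding compact_weights_def by blast
qed

end
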